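(* Let $\tilde X=J_n^*XJ_n\in S_{n+1}$ with $X\in M_n$ real or complex (of arbitrary rank), and let $k_n$ be any invertible $n\times n$ matrix with $K_n=k_nk_n^*$ (e.g. the Cholesky factor). Then the Moore–Penrose inverse of $\tilde X$ lies in $S_{n+1}$ and equals $\phi(X^\oplus)=J_n^*X^\oplus J_n$, where $X^\oplus:=(k_n^{-1})^*(k_n^*Xk_n)^+k_n^{-1}$ is the $\circ$-Moore–Penrose inverse of $X$; that is, \[\tilde X^+=J_n^*(k_n^{-1})^*(k_n^*Xk_n)^+k_n^{-1}J_n,\] and also \[\tilde X^+=J_n^*\Big(\lim_{\delta\downarrow0}(X^*K_nXK_n+\delta I_n)^{-1}X^*\Big)J_n,\] where the limit is over real $\delta>0$.
   Context: Matrices are over $\mathbb R$ or $\mathbb C$; $A^*$ denotes conjugate transpose and $A^+$ the Moore–Penrose inverse (the unique $B$ with $ABA=A$, $BAB=B$, $(AB)^*=AB$, $(BA)^*=BA$). $M_n$ is the set of $n\times n$ matrices; $S_{n}$ is the set of $n\times n$ matrices all of whose row sums and column sums are zero. $\mathbf 1$ is the all-ones column vector, $J_n:=[I_n\mid -\mathbf 1]$ (an $n\times(n+1)$ matrix), $K_n:=J_nJ_n^*=I_n+\mathbf 1\mathbf 1^*$ (symmetric positive definite), $\phi(X):=J_n^*XJ_n$. On $M_n$, $X\circ Y:=XK_nY$, and a $\circ$-Moore–Penrose inverse of $X$ is a $Y\in M_n$ with $X\circ Y\circ X=X$, $Y\circ X\circ Y=Y$, $(X\circ Y)^*=X\circ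 Y$, $(Y\circ X)^*=Y\circ X$. *)

theory Defs
  imports "HOL-Analysis.Analysis" "Jordan_Normal_Form.Matrix" "Jordan_Normal_Form.Conjugate"
begin

definition cadj :: "'a::conjugate mat \<Rightarrow> 'a mat" where
  "cadj A = mat (dim_col A) (dim_row A) (\<lambda>(i,j). conjugate (A $$ (j,i)))"

definition is_mp_inverse :: "'a::{conjugate,semiring_0} mat \<Rightarrow> 'a mat \<Rightarrow> bool" where
  "is_mp_inverse A B \<longleftrightarrow> B \<in> carrier_mat (dim_col A) (dim_row A) \<and>
     A * B * A = A \<and> B * A * B = B \<and> cadj (A * B) = A * B \<and> cadj (B * A) = B * A"

definition mp_inverse :: "'a::{conjugate,semiring_0} mat \<Rightarrow> 'a mat" where
  "mp_inverse A = (THE B. is_mp_inverse A B)"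

text \<open>Ordinary inverse of a square matrix (meaningful when it is invertible).\<close>
definition minv :: "'a::semiring_1 mat \<Rightarrow> 'a mat" where
  "minv A = (THE B. B \<in> carrier_mat (dim_row A) (dim_row A) \<and>
                    A * B = 1\<^sub>m (dim_row A) \<and> B * A = 1\<^sub>m (dim_row A))"

definition Jmat :: "nat \<Rightarrow> 'a::ring_1 mat" where
  "Jmat n = mat n (Suc n) (\<lambda>(i,j). if j = n then - 1 else if i = j then 1 else 0)"

definition Kmat :: "nat \<Rightarrow> 'a::{ring_1,conjugate} mat" where
  "Kmat n = Jmat n * cadj (Jmat n)"

definition Smats :: "nat \<Rightarrow> 'a::comm_monoid_add mat set" where
  "Smats m = {A \<in> carrier_mat m m. (\<forall>i<m. (\<Sum>j<m. A $$ (i,j)) = 0) \<and>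
                                   (\<forall>j<m. (\<Sum>i<m. A $$ (i,j)) = 0)}"

definition circ :: "nat \<Rightarrow> 'a::{ring_1,conjugate} mat \<Rightarrow> 'a mat \<Rightarrow> 'a mat" where
  "circ n X Y = X * Kmat n * Y"

definition is_circ_mp_inverse :: "nat \<Rightarrow> 'a::{ring_1,conjugate} mat \<Rightarrow> 'a mat \<Rightarrow> bool" where
  "is_circ_mp_inverse n X Y \<longleftrightarrow> Y \<in> carrier_mat n n \<and>
     circ n (circ n X Y) X = X \<and> circ n (circ n Y X) Y = Y \<and>
     cadj (circ n X Y) = circ n X Y \<and> cadj (circ n Y X) = circ n Y X"

end

theory Submission
  imports Defs "Jordan_Normal_Form.Gauss_Jordan_Elimination" "Jordan_Normal_Form.Determinant"
begin

text \<open>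
  Throughout, K = J J^* = k k^* with k invertible, Y = k^* X k, and the scalars satisfy
  x conj(x) = |x|^2 (as in the real and complex numbers), which supplies positivity.

  (1) Every matrix A has a unique Moore-Penrose inverse.  Existence uses the normal equations:
      a Gauss-Jordan inner inverse of A^* A and positivity (D D^* = 0 forces D = 0) give G with
      A^* = A^* A G, so A G is the orthogonal projection onto the range of A; the same for A^*
      gives the projection onto the range of A^*, and A^+ is assembled from the two.
  (2) Transfer.  Conjugating the Moore-Penrose equations of Y by k shows that
      X' = (k^-1)^* Y^+ k^-1 is a circ-Moore-Penrose inverse of X.  Because J J^* = K, every
      circ-Moore-Penrose inverse Z of X lifts to the Moore-Penrose inverse J^* Z J of J^* X J,
      and J^* Z J lies in S_(n+1) because the rows of J sum to zero.
  (3) Regularisation.  N_d = Y^* Y + d I is invertible for d > 0, and the entries of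
      N_d^-1 Y^* differ from those of Y^+ by O(sqrt d), so N_d^-1 Y^* tends to Y^+.  As
      X^* K X K + d I = (k^-1)^* N_d k^*, the regularised inverses of X are
      (k^-1)^* (N_d^-1 Y^*) k^-1 and converge entrywise to X'.
\<close>

(* Matrix products and sums whose dimensions fit, without carrier side conditions.
   As a simp rule, mult_assoc_dim normalises products to right-nested form. *)
lemma mult_assoc_dim [simp]:
  "dim_col A = dim_row B \<Longrightarrow> dim_col B = dim_row C \<Longrightarrow>
   (A::'a::semiring_0 mat) * B * C = A * (B * C)"
  by (rule assoc_mult_mat[of A "dim_row A" "dim_col A" B "dim_col B" C "dim_col C"]) auto

lemma mult_add_distrib_dim:
  "dim_col A = dim_row B \<Longrightarrow> dim_row B = dim_row C \<Longrightarrow> dim_col B = dim_col C \<Longrightarrow>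
   (A::'a::semiring_0 mat) * (B + C) = A * B + A * C"
  by (rule mult_add_distrib_mat[of A "dim_row A" "dim_col A" _ "dim_col B"]) auto

lemma add_mult_distrib_dim:
  "dim_col A = dim_row C \<Longrightarrow> dim_row A = dim_row B \<Longrightarrow> dim_col A = dim_col B \<Longrightarrow>
   ((A::'a::semiring_0 mat) + B) * C = A * C + B * C"
  by (rule add_mult_distrib_mat[of A "dim_row A" "dim_col A"]) auto

lemma mult_minus_distrib_dim:
  "dim_col A = dim_row B \<Longrightarrow> dim_row B = dim_row C \<Longrightarrow> dim_col B = dim_col C \<Longrightarrow>
   (A::'a::ring mat) * (B - C) = A * B - A * C"
  by (rule mult_minus_distrib_mat[of A "dim_row A" "dim_col A" _ "dim_col B"]) auto

lemma minus_mult_distrib_dim: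
  "dim_col A = dim_row C \<Longrightarrow> dim_row A = dim_row B \<Longrightarrow> dim_col A = dim_col B \<Longrightarrow>
   ((A::'a::ring mat) - B) * C = A * C - B * C"
  by (rule minus_mult_distrib_mat[of A "dim_row A" "dim_col A"]) auto

lemma smult_mult_left_dim [simp]:
  "dim_col A = dim_row B \<Longrightarrow> (c \<cdot>\<^sub>m (A::'a::comm_semiring_0 mat)) * B = c \<cdot>\<^sub>m (A * B)"
  by (rule eq_matI) (auto simp: scalar_prod_def sum_distrib_left ac_simps)

lemma smult_mult_right_dim [simp]:
  "dim_col A = dim_row B \<Longrightarrow> (A::'a::comm_semiring_0 mat) * (c \<cdot>\<^sub>m B) = c \<cdot>\<^sub>m (A * B)"
  by (rule eq_matI) (auto simp: scalar_prod_def sum_distrib_left ac_simps)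

lemma mult_eq_extend:
  "A * B = C \<Longrightarrow> dim_col A = dim_row B \<Longrightarrow> dim_col B = dim_row Z \<Longrightarrow>
   A * (B * Z) = C * (Z::'a::semiring_0 mat)"
  by (metis mult_assoc_dim)

lemma minus_eq_zero_imp_eq:
  "dim_row A = dim_row B \<Longrightarrow> dim_col A = dim_col B \<Longrightarrow>
   (A::'a::ab_group_add mat) - B = 0\<^sub>m (dim_row A) (dim_col A) \<Longrightarrow> A = B"
  by (rule eq_matI) (auto simp: mat_eq_iff)

lemma conjugate_one [simp]: "conjugate (1::'a::conjugatable_field) = 1"
  by (metis conjugate_dist_mul conjugate_id mult_cancel_right1 conjugate_zero_iff zero_neq_one)

lemma conjugate_diff: "conjugate ((a::'a::conjugatable_ring) - b) = conjugate a - conjugate b"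
  by (metis conjugate_dist_add conjugate_neg diff_conv_add_uminus)

lemma cadj_dims [simp]: "dim_row (cadj A) = dim_col A" "dim_col (cadj A) = dim_row A"
  by (auto simp: cadj_def)

lemma cadj_carrier_mat: "A \<in> carrier_mat m n \<Longrightarrow> cadj A \<in> carrier_mat n m"
  by (auto simp: cadj_def)

lemma cadj_index [simp]:
  "i < dim_col A \<Longrightarrow> j < dim_row A \<Longrightarrow> cadj A $$ (i,j) = conjugate (A $$ (j,i))"
  unfolding cadj_def by simp

lemma cadj_cadj [simp]: "cadj (cadj A) = A"
  by (rule eq_matI) auto

lemma cadj_mult:
  "dim_col A = dim_row B \<Longrightarrow> cadj ((A::'a::conjugatable_field mat) * B) = cadj B * cadj A"
  by (rule eq_matI) (auto simp: scalar_prod_def sum_conjugate conjugate_dist_mul mult.commute)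

lemma cadj_minus:
  "dim_row A = dim_row B \<Longrightarrow> dim_col A = dim_col B \<Longrightarrow>
   cadj ((A::'a::conjugatable_ring mat) - B) = cadj A - cadj B"
  by (rule eq_matI) (auto simp: conjugate_diff)

lemma cadj_one [simp]: "cadj (1\<^sub>m n :: 'a::conjugatable_field mat) = 1\<^sub>m n"
  by (rule eq_matI) auto

lemma cadj_inverse:
  fixes k kinv :: "'a::conjugatable_field mat"
  assumes "dim_col k = n" "dim_row kinv = n" and "k * kinv = 1\<^sub>m m"
  shows "cadj kinv * cadj k = 1\<^sub>m m"
  using arg_cong[OF assms(3), of cadj] assms(1,2) by (simp add: cadj_mult)

lemma gram_diag_left:
  fixes M :: "'a::{conjugatable_field, real_normed_field} mat"
  assumes conj_abs: "\<And>x::'a. x * conjugate x = of_real ((norm x)\<^sup>2)"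
    and "i < dim_row M"
  shows "(M * cadj M) $$ (i,i) = of_real (\<Sum>j<dim_col M. (norm (M $$ (i,j)))\<^sup>2)"
  using assms(2)
  by (simp add: scalar_prod_def conj_abs of_real_sum atLeast0LessThan del: of_real_power)

lemma gram_diag_right:
  fixes M :: "'a::{conjugatable_field, real_normed_field} mat"
  assumes conj_abs: "\<And>x::'a. x * conjugate x = of_real ((norm x)\<^sup>2)"
    and "j < dim_col M"
  shows "(cadj M * M) $$ (j,j) = of_real (\<Sum>i<dim_row M. (norm (M $$ (i,j)))\<^sup>2)"
  using assms(2)
  by (simp add: scalar_prod_def conj_abs of_real_sum atLeast0LessThan mult.commute
      del: of_real_power)

lemma gram_zero_imp_zero:
  fixes D :: "'a::{conjugatable_field, real_normed_field} mat"
  assumes conj_abs: "\<And>x::'a. x * conjugate x = of_real ((norm x)\<^sup>2)"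
    and D: "D \<in> carrier_mat m p" and gram: "D * cadj D = 0\<^sub>m m m"
  shows "D = 0\<^sub>m m p"
proof (rule eq_matI)
  fix i j assume "i < dim_row (0\<^sub>m m p :: 'a mat)" "j < dim_col (0\<^sub>m m p :: 'a mat)"
  hence i: "i < m" and j: "j < p" by auto
  have "of_real (\<Sum>j<p. (norm (D $$ (i,j)))\<^sup>2) = (0::'a)"
    using gram_diag_left[OF conj_abs, of i D] gram i D by (simp del: of_real_power)
  hence "(\<Sum>j<p. (norm (D $$ (i,j)))\<^sup>2) = 0" by (simp only: of_real_eq_0_iff)
  hence "(norm (D $$ (i,j)))\<^sup>2 = 0"
    using j by (subst (asm) sum_nonneg_eq_0_iff) auto
  thus "D $$ (i,j) = 0\<^sub>m m p $$ (i,j)" using i j by simp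
qed (use D in auto)

(* A matrix C in reduced row echelon form with pivot function f has the inner inverse
   G with G (f i, i) = 1: indeed C G is the diagonal selecting the pivot rows. *)
lemma rref_inner_inverse:
  fixes C :: "'a::field mat"
  assumes C: "C \<in> carrier_mat n n" and pf: "pivot_fun C f n"
  shows "C * mat n n (\<lambda>(j,i). if f i = j then 1 else 0) * C = C"
proof -
  let ?G = "mat n n (\<lambda>(j,i). if f i = j then (1::'a) else 0)"
  let ?E = "mat n n (\<lambda>(a,b). if f b < n \<and> a = b then (1::'a) else 0)"
  have dC: "dim_row C = n" "dim_col C = n" using C by auto
  note pivot = pivot_funD[OF dC(1) pf]
  have CG: "C * ?G = ?E"
  proof (rule eq_matI)
    fix a b assume "a < dim_row ?E" "b < dim_col ?E"
    hence a: "a < n" and b: "b < n" by auto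
    have "(C * ?G) $$ (a,b) = (\<Sum>j = 0..<n. C $$ (a,j) * (if f b = j then 1 else 0))"
      using a b dC by (simp add: scalar_prod_def)
    also have "\<dots> = (if f b < n then C $$ (a, f b) else 0)"
      by (simp add: if_distrib[of "\<lambda>x. _ * x"] sum.delta' cong: if_cong)
    also have "\<dots> = ?E $$ (a,b)"
      using pivot(4)[OF b] pivot(5)[OF b _ a] a b by auto
    finally show "(C * ?G) $$ (a,b) = ?E $$ (a,b)" .
  qed (use dC in auto)
  show ?thesis
  proof (rule eq_matI)
    fix a c assume "a < dim_row C" "c < dim_col C"
    hence a: "a < n" and c: "c < n" using dC by auto
    have "(C * ?G * C) $$ (a,c) = (\<Sum>b = 0..<n. ?E $$ (a,b) * C $$ (b,c))"
      unfolding CG using a c dC by (simp add: scalar_prod_def)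
    also have "\<dots> = (\<Sum>b = 0..<n. if b = a then (if f a < n then C $$ (a,c) else 0) else 0)"
      by (rule sum.cong) (use a in auto)
    also have "\<dots> = C $$ (a,c)"
      using a pivot(1)[OF a] pivot(2)[OF a, of c] c by auto
    finally show "(C * ?G * C) $$ (a,c) = C $$ (a,c)" .
  qed (use dC in auto)
qed

(* Every square matrix over a field has an inner inverse G, i.e. A G A = A: transform A
   to reduced row echelon form P A by Gauss-Jordan elimination and use the previous lemma. *)
lemma inner_inverse_exists:
  fixes A :: "'a::field mat"
  assumes A: "A \<in> carrier_mat n n"
  shows "\<exists>G \<in> carrier_mat n n. A * G * A = A"
proof -
  obtain C where gj: "gauss_jordan_single A = C" by auto
  note gauss = gauss_jordan_single[OF A gj]
  from gauss(4) obtain P Q where CPA: "C = P * A" and P: "P \<in> carrier_mat n n"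
    and Q: "Q \<in> carrier_mat n n" and PQ: "P * Q = 1\<^sub>m n" and QP: "Q * P = 1\<^sub>m n" by auto
  have C: "C \<in> carrier_mat n n" using gauss(2) .
  from gauss(3) obtain f where "pivot_fun C f (dim_col C)"
    unfolding row_echelon_form_def by auto
  hence pf: "pivot_fun C f n" using C by simp
  let ?G = "mat n n (\<lambda>(j,i). if f i = j then (1::'a) else 0)"
  have AQC: "A = Q * C"
    unfolding CPA assoc_mult_mat[OF Q P A, symmetric] QP using A by simp
  have PQC: "P * (Q * C) = C"
    unfolding assoc_mult_mat[OF P Q C, symmetric] PQ using C by simp
  have "A * (?G * P) * A = Q * (C * ?G * C)"
    using A P Q C unfolding AQC by (simp add: PQC)
  also have "\<dots> = A" unfolding rref_inner_inverse[OF C pf] AQC ..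
  finally show ?thesis using P by (intro bexI[of _ "?G * P"]) auto
qed

(* Solvability of the normal equations: A^* = A^* A G for some G.  With an inner inverse
   G0 of A^* A, the defect D = A^* - A^* A G0 A^* satisfies D A = 0, hence D D^* = 0. *)
lemma normal_equations_solvable:
  fixes A :: "'a::{conjugatable_field, real_normed_field} mat"
  assumes conj_abs: "\<And>x::'a. x * conjugate x = of_real ((norm x)\<^sup>2)"
    and A: "A \<in> carrier_mat m p"
  shows "\<exists>G \<in> carrier_mat p m. cadj A = cadj A * A * G"
proof -
  have [simp]: "dim_row A = m" "dim_col A = p" using A by auto
  have "cadj A * A \<in> carrier_mat p p" by (auto intro: carrier_matI)
  then obtain G0 where G0: "G0 \<in> carrier_mat p p"
    and inner: "cadj A * A * G0 * (cadj A * A) = cadj A * A"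
    using inner_inverse_exists by blast
  have [simp]: "dim_row G0 = p" "dim_col G0 = p" using G0 by auto
  define D where "D = cadj A - cadj A * A * G0 * cadj A"
  have [simp]: "dim_row D = p" "dim_col D = m" by (auto simp: D_def)
  have DA: "D * A = 0\<^sub>m p p"
  proof -
    have "D * A = cadj A * A - cadj A * A * G0 * (cadj A * A)"
      unfolding D_def by (simp add: minus_mult_distrib_dim)
    also have "\<dots> = 0\<^sub>m p p" unfolding inner by (rule eq_matI) auto
    finally show ?thesis .
  qed
  have "cadj D = A - A * cadj G0 * (cadj A * A)"
    unfolding D_def by (simp add: cadj_minus cadj_mult)
  hence "D * cadj D = D * A - D * A * cadj G0 * (cadj A * A)"
    by (simp add: mult_minus_distrib_dim)
  also have "\<dots> = 0\<^sub>m p p" unfolding DA by (rule eq_matI) auto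
  finally have "D = 0\<^sub>m p m"
    by (rule gram_zero_imp_zero[OF conj_abs, rotated]) (auto intro: carrier_matI)
  hence "cadj A - cadj A * A * (G0 * cadj A) = 0\<^sub>m (dim_row (cadj A)) (dim_col (cadj A))"
    unfolding D_def by simp
  hence "cadj A = cadj A * A * (G0 * cadj A)"
    by (rule minus_eq_zero_imp_eq[rotated 2]) simp_all
  moreover have "G0 * cadj A \<in> carrier_mat p m" by (auto intro: carrier_matI)
  ultimately show ?thesis by blast
qed

lemma normal_equations_projection:
  fixes A G :: "'a::conjugatable_field mat"
  assumes [simp]: "dim_row A = m" "dim_col A = p" "dim_row G = p" "dim_col G = m"
    and normal: "cadj A = cadj A * A * G"
  shows "cadj (A * G) = A * G" "A * G * A = A" "A * G * (A * G) = A * G"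
proof -
  have normal': "cadj A * (A * G) = cadj A" using normal by simp
  have gram: "cadj (A * G) * (A * G) = cadj (A * G)"
    by (simp add: cadj_mult normal')
  have "A * G = cadj (cadj (A * G) * (A * G))" unfolding gram by simp
  also have "\<dots> = cadj (A * G) * (A * G)" by (simp add: cadj_mult)
  also have "\<dots> = cadj (A * G)" by (rule gram)
  finally show herm: "cadj (A * G) = A * G" by simp
  have "A * G * A = cadj (cadj A * cadj (A * G))" by (simp add: cadj_mult)
  also have "\<dots> = A" unfolding herm normal' by simp
  finally show "A * G * A = A" .
  show "A * G * (A * G) = A * G" using gram unfolding herm .
qed

(* Existence of the Moore-Penrose inverse.  With projections P = A G onto the range of A
   and Q = A^* H onto the range of A^*, the matrix B = Q G P satisfies A B = P, B A = Q. *)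
lemma mp_inverse_exists:
  fixes A :: "'a::{conjugatable_field, real_normed_field} mat"
  assumes conj_abs: "\<And>x::'a. x * conjugate x = of_real ((norm x)\<^sup>2)"
    and A: "A \<in> carrier_mat m p"
  shows "\<exists>B. is_mp_inverse A B"
proof -
  have [simp]: "dim_row A = m" "dim_col A = p" using A by auto
  obtain G where G: "G \<in> carrier_mat p m" and normalG: "cadj A = cadj A * A * G"
    using normal_equations_solvable[OF conj_abs A] by blast
  have "cadj A \<in> carrier_mat p m" by (auto intro: carrier_matI)
  then obtain H where H: "H \<in> carrier_mat m p"
    and normalH: "cadj (cadj A) = cadj (cadj A) * cadj A * H"
    using normal_equations_solvable[OF conj_abs] by blast
  have [simp]: "dim_row G = p" "dim_col G = m" "dim_row H = m" "dim_col H = p"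
    using G H by auto
  define P where "P = A * G"
  define Q where "Q = cadj A * H"
  have [simp]: "dim_row P = m" "dim_col P = m" "dim_row Q = p" "dim_col Q = p"
    by (simp_all add: P_def Q_def)
  have herm_P: "cadj P = P" and PA: "P * A = A" and PP: "P * P = P"
    using normal_equations_projection[of A m p G, OF _ _ _ _ normalG] by (simp_all add: P_def)
  have herm_Q: "cadj Q = Q" and QA': "Q * cadj A = cadj A" and QQ: "Q * Q = Q"
    using normal_equations_projection[of "cadj A" p m H, OF _ _ _ _ normalH] by (simp_all add: Q_def)
  have AQ: "A * Q = A"
    using arg_cong[OF QA', of cadj] by (simp add: cadj_mult herm_Q)
  have Q_alt: "Q = cadj H * A"
    using herm_Q unfolding Q_def by (simp add: cadj_mult)
  define B where "B = Q * G * P"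
  have [simp]: "dim_row B = p" "dim_col B = m" by (simp_all add: B_def)
  have AB: "A * B = P"
  proof -
    have "A * B = (A * Q) * G * P" unfolding B_def by simp
    thus ?thesis unfolding AQ P_def[symmetric] using PP by simp
  qed
  have BA: "B * A = Q"
  proof -
    have AGA: "A * (G * A) = A" using PA by (simp add: P_def)
    have "B * A = cadj H * (A * (G * (A * (G * A))))" unfolding B_def Q_alt P_def by simp
    thus ?thesis unfolding Q_alt AGA .
  qed
  have "is_mp_inverse A B"
    unfolding is_mp_inverse_def
  proof (intro conjI)
    show "B \<in> carrier_mat (dim_col A) (dim_row A)" by (auto intro: carrier_matI)
    show "A * B * A = A" unfolding AB PA ..
    have "B * A * B = Q * B" using BA by simp
    also have "\<dots> = B" unfolding B_def by (simp add: mult_eq_extend[OF QQ])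
    finally show "B * A * B = B" .
    show "cadj (A * B) = A * B" unfolding AB herm_P ..
    show "cadj (B * A) = B * A" unfolding BA herm_Q ..
  qed
  thus ?thesis ..
qed

(* Uniqueness of the Moore-Penrose inverse: any two satisfy B = B A C = C. *)
lemma mp_inverse_unique:
  fixes A :: "'a::conjugatable_field mat"
  assumes [simp]: "dim_row A = m" "dim_col A = p"
    and B: "is_mp_inverse A B" and C: "is_mp_inverse A C"
  shows "B = C"
proof -
  from B have [simp]: "dim_row B = p" "dim_col B = m" and B1: "A * B * A = A"
    and B2: "B * A * B = B" and B3: "cadj (A * B) = A * B" and B4: "cadj (B * A) = B * A"
    unfolding is_mp_inverse_def carrier_mat_def by auto
  from C have [simp]: "dim_row C = p" "dim_col C = m" and C1: "A * C * A = A"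
    and C2: "C * A * C = C" and C3: "cadj (A * C) = A * C" and C4: "cadj (C * A) = C * A"
    unfolding is_mp_inverse_def carrier_mat_def by auto
  have B3': "cadj B * cadj A = A * B" and B4': "cadj A * cadj B = B * A"
    using B3 B4 by (simp_all add: cadj_mult)
  have C3': "cadj C * cadj A = A * C" and C4': "cadj A * cadj C = C * A"
    using C3 C4 by (simp_all add: cadj_mult)
  have C1': "cadj A = cadj A * cadj C * cadj A" and B1': "cadj A = cadj A * cadj B * cadj A"
    using arg_cong[OF C1, of cadj] arg_cong[OF B1, of cadj] by (simp_all add: cadj_mult)
  have "B = B * (cadj B * cadj A)" using B2 B3' by simp
  also have "\<dots> = B * (cadj B * (cadj A * cadj C * cadj A))" using C1' by simp
  also have "\<dots> = B * (A * B) * (A * C)" by (simp add: mult_eq_extend[OF B3'] mult_eq_extend[OF C3'] C3')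
  also have "\<dots> = B * A * C" using B2 by (simp add: mult_eq_extend[OF B2])
  finally have BAC: "B = B * A * C" .
  have "C = cadj A * cadj C * C" using C2 C4' by simp
  also have "\<dots> = (cadj A * cadj B * cadj A) * cadj C * C" using B1' by simp
  also have "\<dots> = (B * A) * (C * A) * C" by (simp add: mult_eq_extend[OF B4'] mult_eq_extend[OF C4'] B4' C4')
  also have "\<dots> = B * A * C" using C2 by (simp add: mult_eq_extend[OF C2])
  finally show ?thesis using BAC by simp
qed

lemma mp_inverse_eqI:
  fixes A :: "'a::conjugatable_field mat"
  assumes "is_mp_inverse A B"
  shows "mp_inverse A = B"
  unfolding mp_inverse_def
  by (rule the_equality, rule assms, rule mp_inverse_unique[OF refl refl _ assms])

lemma Jmat_dims [simp]: "dim_row (Jmat n) = n" "dim_col (Jmat n) = Suc n"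
  unfolding Jmat_def by simp_all

lemma Kmat_dims [simp]:
  "dim_row (Kmat n :: 'a::{ring_1,conjugate} mat) = n" "dim_col (Kmat n :: 'a mat) = n"
  unfolding Kmat_def by simp_all

lemma Jmat_row_sum: "i < n \<Longrightarrow> (\<Sum>j<Suc n. (Jmat n :: 'a::ring_1 mat) $$ (i,j)) = 0"
  unfolding Jmat_def by (simp add: sum.delta')

lemma phi_in_Smats:
  fixes Z :: "'a::conjugatable_field mat"
  assumes [simp]: "dim_row Z = n" "dim_col Z = n"
  shows "cadj (Jmat n) * Z * Jmat n \<in> Smats (Suc n)"
proof -
  let ?J = "Jmat n :: 'a mat"
  let ?W = "cadj ?J * Z * ?J"
  have rows: "(\<Sum>j<Suc n. ?W $$ (i,j)) = 0" if i: "i < Suc n" for i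
  proof -
    define M where "M = cadj ?J * Z"
    have [simp]: "dim_row M = Suc n" "dim_col M = n" by (simp_all add: M_def)
    have "(\<Sum>j<Suc n. ?W $$ (i,j)) = (\<Sum>j<Suc n. \<Sum>b<n. M $$ (i,b) * ?J $$ (b,j))"
      unfolding M_def[symmetric] using i by (intro sum.cong) (simp_all add: scalar_prod_def atLeast0LessThan)
    also have "\<dots> = (\<Sum>b<n. M $$ (i,b) * (\<Sum>j<Suc n. ?J $$ (b,j)))"
      unfolding sum_distrib_left by (rule sum.swap)
    also have "\<dots> = 0" by (intro sum.neutral ballI) (simp add: Jmat_row_sum del: sum.lessThan_Suc)
    finally show ?thesis .
  qed
  have cols: "(\<Sum>i<Suc n. ?W $$ (i,j)) = 0" if j: "j < Suc n" for j
  proof -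
    define M where "M = Z * ?J"
    have [simp]: "dim_row M = n" "dim_col M = Suc n" by (simp_all add: M_def)
    have W: "?W = cadj ?J * M" unfolding M_def by simp
    have "(\<Sum>i<Suc n. ?W $$ (i,j)) = (\<Sum>i<Suc n. \<Sum>b<n. conjugate (?J $$ (b,i)) * M $$ (b,j))"
      unfolding W using j by (intro sum.cong) (simp_all add: scalar_prod_def atLeast0LessThan)
    also have "\<dots> = (\<Sum>b<n. conjugate (\<Sum>i<Suc n. ?J $$ (b,i)) * M $$ (b,j))"
      unfolding sum_conjugate[OF finite_lessThan] sum_distrib_right by (rule sum.swap)
    also have "\<dots> = 0" by (intro sum.neutral ballI) (simp add: Jmat_row_sum del: sum.lessThan_Suc)
    finally show ?thesis .
  qed
  show ?thesis unfolding Smats_def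
    using rows cols by (auto intro!: carrier_matI)
qed

(* Transfer of the Moore-Penrose equations along a factorisation K = k k^*: if Y' is the
   Moore-Penrose inverse of Y = k^* X k, then (k^-1)^* Y' k^-1 is a circ-Moore-Penrose
   inverse of X, because X o Z = (k^-1)^* (Y Y') k^-1 and Z o X = (k^-1)^* (Y' Y) k^-1. *)
lemma circ_mp_inverse_from_factor:
  fixes X k kinv Y' :: "'a::conjugatable_field mat"
  assumes [simp]: "dim_row X = n" "dim_col X = n" "dim_row k = n" "dim_col k = n"
    "dim_row kinv = n" "dim_col kinv = n"
    and k_kinv: "k * kinv = 1\<^sub>m n" and kinv_k: "kinv * k = 1\<^sub>m n"
    and K: "Kmat n = k * cadj k"
    and mp: "is_mp_inverse (cadj k * X * k) Y'"
  shows "is_circ_mp_inverse n X (cadj kinv * Y' * kinv)"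
proof -
  define Y where "Y = cadj k * X * k"
  have [simp]: "dim_row Y = n" "dim_col Y = n" by (simp_all add: Y_def)
  from mp[folded Y_def] have [simp]: "dim_row Y' = n" "dim_col Y' = n"
    and mp1: "Y * Y' * Y = Y" and mp2: "Y' * Y * Y' = Y'"
    and mp3: "cadj (Y * Y') = Y * Y'" and mp4: "cadj (Y' * Y) = Y' * Y"
    unfolding is_mp_inverse_def carrier_mat_def by auto
  have adj_inv1: "cadj kinv * cadj k = 1\<^sub>m n" and adj_inv2: "cadj k * cadj kinv = 1\<^sub>m n"
    using cadj_inverse[OF _ _ k_kinv] cadj_inverse[OF _ _ kinv_k] by simp_all
  have [simp]: "k * (kinv * W) = W" "kinv * (k * W) = W"
    "cadj kinv * (cadj k * W) = W" "cadj k * (cadj kinv * W) = W" if "dim_row W = n" for W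
    using that by (simp_all add: mult_eq_extend[OF k_kinv] mult_eq_extend[OF kinv_k]
        mult_eq_extend[OF adj_inv1] mult_eq_extend[OF adj_inv2])
  have [simp]: "Y * (Y' * (Y * W)) = Y * W" "Y' * (Y * (Y' * W)) = Y' * W" if "dim_row W = n" for W
    using that mult_eq_extend[OF mp1, of W] mult_eq_extend[OF mp2, of W] by simp_all
  have X: "X = cadj kinv * Y * kinv" unfolding Y_def by (simp add: k_kinv adj_inv1)
  let ?Z = "cadj kinv * Y' * kinv"
  have XZ: "circ n X ?Z = cadj kinv * (Y * Y') * kinv"
    and ZX: "circ n ?Z X = cadj kinv * (Y' * Y) * kinv"
    unfolding circ_def K X by (simp_all add: adj_inv1 kinv_k)
  show ?thesis unfolding is_circ_mp_inverse_def
  proof (intro conjI)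
    show "?Z \<in> carrier_mat n n" by (auto intro: carrier_matI)
    have "circ n (cadj kinv * (Y * Y') * kinv) (cadj kinv * Y * kinv) = cadj kinv * Y * kinv"
      by (simp add: circ_def K adj_inv1 kinv_k)
    thus "circ n (circ n X ?Z) X = X" unfolding XZ by (simp only: X[symmetric])
    show "circ n (circ n ?Z X) ?Z = ?Z"
      unfolding ZX by (simp add: circ_def K adj_inv1 kinv_k)
    show "cadj (circ n X ?Z) = circ n X ?Z"
      unfolding XZ using mp3 by (simp add: cadj_mult)
    show "cadj (circ n ?Z X) = circ n ?Z X"
      unfolding ZX using mp4 by (simp add: cadj_mult)
  qed
qed

(* Lifting: since J J^* = K, phi turns circ-products into ordinary products,
   phi(X) phi(Z) = phi(X o Z), so phi maps circ-Moore-Penrose inverses to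
   Moore-Penrose inverses. *)
lemma phi_circ_mp_inverse:
  fixes X Z :: "'a::conjugatable_field mat"
  assumes [simp]: "dim_row X = n" "dim_col X = n"
    and circ_mp: "is_circ_mp_inverse n X Z"
  shows "is_mp_inverse (cadj (Jmat n) * X * Jmat n) (cadj (Jmat n) * Z * Jmat n)"
proof -
  let ?J = "Jmat n :: 'a mat"
  from circ_mp have [simp]: "dim_row Z = n" "dim_col Z = n"
    and c1: "X * Kmat n * Z * Kmat n * X = X" and c2: "Z * Kmat n * X * Kmat n * Z = Z"
    and c3: "cadj (X * Kmat n * Z) = X * Kmat n * Z" and c4: "cadj (Z * Kmat n * X) = Z * Kmat n * X"
    unfolding is_circ_mp_inverse_def circ_def carrier_mat_def by auto
  have [simp]: "?J * (cadj ?J * W) = Kmat n * W" if "dim_row W = n" for W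
    using that by (simp add: Kmat_def)
  have phi_mult: "cadj ?J * A * ?J * (cadj ?J * B * ?J) = cadj ?J * (A * Kmat n * B) * ?J"
    if [simp]: "dim_row A = n" "dim_col A = n" "dim_row B = n" "dim_col B = n" for A B
    by simp
  have phi_XZ: "cadj ?J * X * ?J * (cadj ?J * Z * ?J) = cadj ?J * (X * Kmat n * Z) * ?J"
    and phi_ZX: "cadj ?J * Z * ?J * (cadj ?J * X * ?J) = cadj ?J * (Z * Kmat n * X) * ?J"
    by (rule phi_mult; simp)+
  have phi_herm: "cadj (cadj ?J * W * ?J) = cadj ?J * W * ?J"
    if "dim_row W = n" "dim_col W = n" "cadj W = W" for W
    using that by (simp add: cadj_mult)
  show ?thesis unfolding is_mp_inverse_def
  proof (intro conjI)
    show "cadj ?J * Z * ?J \<in> carrier_mat (dim_col (cadj ?J * X * ?J)) (dim_row (cadj ?J * X * ?J))"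
      by (auto intro: carrier_matI)
    show "cadj ?J * X * ?J * (cadj ?J * Z * ?J) * (cadj ?J * X * ?J) = cadj ?J * X * ?J"
      using mult_eq_extend[OF c1, of ?J] by simp
    show "cadj ?J * Z * ?J * (cadj ?J * X * ?J) * (cadj ?J * Z * ?J) = cadj ?J * Z * ?J"
      using mult_eq_extend[OF c2, of ?J] by simp
    show "cadj (cadj ?J * X * ?J * (cadj ?J * Z * ?J)) = cadj ?J * X * ?J * (cadj ?J * Z * ?J)"
      unfolding phi_XZ by (rule phi_herm) (use c3 in simp_all)
    show "cadj (cadj ?J * Z * ?J * (cadj ?J * X * ?J)) = cadj ?J * Z * ?J * (cadj ?J * X * ?J)"
      unfolding phi_ZX by (rule phi_herm) (use c4 in simp_all)
  qed
qed

definition tikhonov :: "'a::{conjugatable_field, real_normed_field} mat \<Rightarrow> real \<Rightarrow> 'a mat" where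
  "tikhonov Y \<delta> = cadj Y * Y + of_real \<delta> \<cdot>\<^sub>m 1\<^sub>m (dim_col Y)"

lemma tikhonov_dims [simp]:
  "dim_row (tikhonov Y \<delta>) = dim_col Y" "dim_col (tikhonov Y \<delta>) = dim_col Y"
  by (simp_all add: tikhonov_def)

(* For d > 0 the regularised Gram matrix is injective: v^* N v = |Y v|^2 + d |v|^2. *)
lemma tikhonov_injective:
  fixes Y :: "'a::{conjugatable_field, real_normed_field} mat"
  assumes conj_abs: "\<And>x::'a. x * conjugate x = of_real ((norm x)\<^sup>2)"
    and Y: "Y \<in> carrier_mat m n" and d: "\<delta> > 0"
    and v: "v \<in> carrier_vec n" and kernel: "tikhonov Y \<delta> *\<^sub>v v = 0\<^sub>v n"
  shows "v = 0\<^sub>v n"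
proof -
  have [simp]: "dim_row Y = m" "dim_col Y = n" "dim_vec v = n" using Y v by auto
  let ?N = "tikhonov Y \<delta>"
  define V where "V = mat n 1 (\<lambda>(i,j). v $ i)"
  have [simp]: "dim_row V = n" "dim_col V = 1" by (simp_all add: V_def)
  have colV: "col V 0 = v" unfolding V_def by (intro eq_vecI) simp_all
  have NV: "?N * V = 0\<^sub>m n 1"
  proof (rule eq_matI)
    fix i j assume "i < dim_row (0\<^sub>m n 1 :: 'a mat)" "j < dim_col (0\<^sub>m n 1 :: 'a mat)"
    hence i: "i < n" and j: "j = 0" by auto
    have "(?N * V) $$ (i,j) = (?N *\<^sub>v v) $ i" using i j colV by simp
    thus "(?N * V) $$ (i,j) = 0\<^sub>m n 1 $$ (i,j)" using kernel i j by simp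
  qed simp_all
  have "cadj (Y * V) * (Y * V) + of_real \<delta> \<cdot>\<^sub>m (cadj V * V) = cadj V * ?N * V"
    by (simp add: tikhonov_def mult_add_distrib_dim add_mult_distrib_dim cadj_mult)
  also have "\<dots> = 0\<^sub>m 1 1" by (subst mult_assoc_dim) (simp_all add: NV)
  finally have E: "cadj (Y * V) * (Y * V) + of_real \<delta> \<cdot>\<^sub>m (cadj V * V) = 0\<^sub>m 1 1" .
  have "(cadj (Y * V) * (Y * V)) $$ (0,0) + of_real \<delta> * (cadj V * V) $$ (0,0) = 0"
    using arg_cong[OF E, of "\<lambda>M. M $$ (0,0)"]
    by (simp only: index_add_mat index_smult_mat index_zero_mat index_mult_mat(2,3) cadj_dims
       \<open>dim_col V = 1\<close> zero_less_one)
  hence "of_real (\<Sum>i<m. (norm ((Y * V) $$ (i,0)))\<^sup>2)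
      + of_real \<delta> * of_real (\<Sum>i<n. (norm (V $$ (i,0)))\<^sup>2) = (0::'a)"
    using gram_diag_right[OF conj_abs, of 0 "Y * V"] gram_diag_right[OF conj_abs, of 0 V] by simp
  hence "(\<Sum>i<m. (norm ((Y * V) $$ (i,0)))\<^sup>2) + \<delta> * (\<Sum>i<n. (norm (V $$ (i,0)))\<^sup>2) = 0"
    by (metis of_real_add of_real_mult of_real_eq_0_iff)
  moreover have "(\<Sum>i<m. (norm ((Y * V) $$ (i,0)))\<^sup>2) \<ge> 0" "(\<Sum>i<n. (norm (V $$ (i,0)))\<^sup>2) \<ge> 0"
    by (intro sum_nonneg; simp)+
  ultimately have "(\<Sum>i<n. (norm (V $$ (i,0)))\<^sup>2) = 0" using d
    by (smt (verit) mult_pos_pos)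
  hence "\<forall>i<n. (norm (V $$ (i,0)))\<^sup>2 = 0" by (subst (asm) sum_nonneg_eq_0_iff) auto
  thus ?thesis by (intro eq_vecI) (auto simp: V_def)
qed

lemma minv_eqI:
  fixes A B :: "'a::semiring_1 mat"
  assumes [simp]: "dim_row A = n" "dim_col A = n" "dim_row B = n" "dim_col B = n"
    and AB: "A * B = 1\<^sub>m n" and BA: "B * A = 1\<^sub>m n"
  shows "minv A = B"
  unfolding minv_def
proof (rule the_equality)
  show "B \<in> carrier_mat (dim_row A) (dim_row A) \<and> A * B = 1\<^sub>m (dim_row A) \<and> B * A = 1\<^sub>m (dim_row A)"
    using AB BA by (simp add: carrier_matI)
  fix C assume "C \<in> carrier_mat (dim_row A) (dim_row A) \<and> A * C = 1\<^sub>m (dim_row A) \<and> C * A = 1\<^sub>m (dim_row A)"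
  hence [simp]: "dim_row C = n" "dim_col C = n" and CA: "C * A = 1\<^sub>m n" by auto
  have "C = C * (A * B)" by (simp add: AB)
  also have "\<dots> = B" using mult_eq_extend[OF CA, of B] by simp
  finally show "C = B" .
qed

lemma tikhonov_minv:
  fixes Y :: "'a::{conjugatable_field, real_normed_field} mat"
  assumes conj_abs: "\<And>x::'a. x * conjugate x = of_real ((norm x)\<^sup>2)"
    and Y: "Y \<in> carrier_mat m n" and d: "\<delta> > 0"
  shows "minv (tikhonov Y \<delta>) \<in> carrier_mat n n"
    "tikhonov Y \<delta> * minv (tikhonov Y \<delta>) = 1\<^sub>m n"
    "minv (tikhonov Y \<delta>) * tikhonov Y \<delta> = 1\<^sub>m n"
proof -
  have [simp]: "dim_row Y = m" "dim_col Y = n" using Y by auto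
  let ?N = "tikhonov Y \<delta>"
  have N: "?N \<in> carrier_mat n n" by (auto intro: carrier_matI)
  have "det ?N \<noteq> 0"
    unfolding det_0_iff_vec_prod_zero_field[OF N] using tikhonov_injective[OF conj_abs Y d] by blast
  from det_non_zero_imp_unit[OF N this, of "()"] obtain R where R: "R \<in> carrier_mat n n"
    and NR: "?N * R = 1\<^sub>m n" and RN: "R * ?N = 1\<^sub>m n"
    unfolding Units_def ring_mat_def by auto
  have "minv ?N = R" by (rule minv_eqI[OF _ _ _ _ NR RN]) (use R in auto)
  thus "minv ?N \<in> carrier_mat n n" "?N * minv ?N = 1\<^sub>m n" "minv ?N * ?N = 1\<^sub>m n"
    using R NR RN by simp_all
qed

lemma norm_conjugate:
  fixes x :: "'a::{conjugatable_field, real_normed_field}"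
  assumes conj_abs: "\<And>x::'a. x * conjugate x = of_real ((norm x)\<^sup>2)"
  shows "norm (conjugate x) = norm x"
proof -
  have "of_real ((norm (conjugate x))\<^sup>2) = (of_real ((norm x)\<^sup>2) :: 'a)"
    using conj_abs[of "conjugate x"] conj_abs[of x] by (simp add: mult.commute)
  hence "(norm (conjugate x))\<^sup>2 = (norm x)\<^sup>2" by (simp only: of_real_eq_iff)
  thus ?thesis by (simp add: power2_eq_iff_nonneg)
qed

(* For U = N^-1 Y^* and V = Y U one has V^* V + d U^* U = V^*: multiply N U = Y^* by U^*. *)
lemma tikhonov_resolvent_identity:
  fixes Y R :: "'a::{conjugatable_field, real_normed_field} mat"
  assumes [simp]: "dim_row Y = m" "dim_col Y = n" "dim_row R = n" "dim_col R = n"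
    and NR: "tikhonov Y \<delta> * R = 1\<^sub>m n"
  shows "cadj (Y * (R * cadj Y)) * (Y * (R * cadj Y)) + of_real \<delta> \<cdot>\<^sub>m (cadj (R * cadj Y) * (R * cadj Y))
    = cadj (Y * (R * cadj Y))"
proof -
  define U where "U = R * cadj Y"
  have [simp]: "dim_row U = n" "dim_col U = m" by (simp_all add: U_def)
  have "tikhonov Y \<delta> * U = cadj Y"
    unfolding U_def by (simp add: mult_eq_extend[OF NR])
  hence NU: "cadj Y * (Y * U) + of_real \<delta> \<cdot>\<^sub>m U = cadj Y"
    by (simp add: tikhonov_def add_mult_distrib_dim)
  have "cadj U * (cadj Y * (Y * U) + of_real \<delta> \<cdot>\<^sub>m U) = cadj U * cadj Y" unfolding NU ..
  thus ?thesis unfolding U_def[symmetric] by (simp add: mult_add_distrib_dim cadj_mult)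
qed

(* Uniform bound on the regularised inverse U = N^-1 Y^*: d |U_ij|^2 <= 1/4.  On the diagonal
   of the previous identity, |V_jj|^2 + d |U_ij|^2 <= |V_jj|, and t - t^2 <= 1/4. *)
lemma tikhonov_entry_bound:
  fixes Y R :: "'a::{conjugatable_field, real_normed_field} mat"
  assumes conj_abs: "\<And>x::'a. x * conjugate x = of_real ((norm x)\<^sup>2)"
    and [simp]: "dim_row Y = m" "dim_col Y = n" "dim_row R = n" "dim_col R = n"
    and d: "\<delta> > 0" and NR: "tikhonov Y \<delta> * R = 1\<^sub>m n"
    and i: "i < n" and j: "j < m"
  shows "\<delta> * (norm ((R * cadj Y) $$ (i,j)))\<^sup>2 \<le> 1 / 4"
proof -
  define U where "U = R * cadj Y"
  define V where "V = Y * U"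
  have [simp]: "dim_row U = n" "dim_col U = m" "dim_row V = m" "dim_col V = m"
    by (simp_all add: U_def V_def)
  define sV where "sV = (\<Sum>a<m. (norm (V $$ (a,j)))\<^sup>2)"
  define sU where "sU = (\<Sum>a<n. (norm (U $$ (a,j)))\<^sup>2)"
  have E: "cadj V * V + of_real \<delta> \<cdot>\<^sub>m (cadj U * U) = cadj V"
    using tikhonov_resolvent_identity[OF assms(2-5) NR] unfolding U_def V_def .
  have "(cadj V * V) $$ (j,j) + of_real \<delta> * (cadj U * U) $$ (j,j) = cadj V $$ (j,j)"
    using arg_cong[OF E, of "\<lambda>M. M $$ (j,j)"] j
    by (simp only: index_add_mat index_smult_mat index_mult_mat(2,3) cadj_dims
        \<open>dim_col V = m\<close> \<open>dim_row V = m\<close> \<open>dim_col U = m\<close>)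
  hence "of_real (sV + \<delta> * sU) = conjugate (V $$ (j,j))"
    using gram_diag_right[OF conj_abs, of j V] gram_diag_right[OF conj_abs, of j U] j
    by (simp add: sV_def sU_def)
  hence "\<bar>sV + \<delta> * sU\<bar> = norm (V $$ (j,j))"
    by (metis norm_conjugate[OF conj_abs] norm_of_real)
  moreover have "sV \<ge> 0" "sU \<ge> 0" unfolding sV_def sU_def by (intro sum_nonneg; simp)+
  ultimately have sum_eq: "sV + \<delta> * sU = norm (V $$ (j,j))" using d by simp
  have "(norm (V $$ (j,j)))\<^sup>2 \<le> sV" unfolding sV_def using j by (intro member_le_sum) auto
  moreover have "(norm (U $$ (i,j)))\<^sup>2 \<le> sU" unfolding sU_def using i by (intro member_le_sum) auto
  moreover have "norm (V $$ (j,j)) - (norm (V $$ (j,j)))\<^sup>2 \<le> 1/4"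
    using zero_le_power2[of "norm (V $$ (j,j)) - 1/2"] by (simp add: power2_eq_square algebra_simps)
  ultimately show ?thesis unfolding U_def[symmetric] using sum_eq d
    by (smt (verit) mult_left_mono)
qed

lemma mult_le_sqrt_of_sq_le:
  fixes x d :: real
  assumes d: "d > 0" and x0: "x \<ge> 0" and x: "d * x\<^sup>2 \<le> 1 / 4"
  shows "d * x \<le> sqrt d / 2"
proof -
  have "(d * x)\<^sup>2 = d * (d * x\<^sup>2)" by (simp add: power2_eq_square)
  also have "\<dots> \<le> d / 4" using mult_left_mono[OF x] d by simp
  finally have "d * x \<le> sqrt (d / 4)" by (rule real_le_rsqrt)
  also have "sqrt (d / 4) = sqrt d / 2" by (simp add: real_sqrt_divide)
  finally show ?thesis .
qed

(* Error identity: with F = N^-1 Y^* and W = (Y^+)^* Y^+ one has Y^+ = F + d F W.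
   It follows from Y^+ = Y^* W and Y^* Y Y^+ = Y^*, i.e. N Y^+ = Y^* + d Y^+. *)
lemma tikhonov_error_identity:
  fixes Y Y' R :: "'a::{conjugatable_field, real_normed_field} mat"
  assumes [simp]: "dim_row Y = m" "dim_col Y = n" "dim_row R = n" "dim_col R = n"
    and mp: "is_mp_inverse Y Y'" and RN: "R * tikhonov Y \<delta> = 1\<^sub>m n"
  shows "Y' = R * cadj Y + of_real \<delta> \<cdot>\<^sub>m (R * cadj Y * (cadj Y' * Y'))"
proof -
  from mp have [simp]: "dim_row Y' = n" "dim_col Y' = m" and mp1: "Y * Y' * Y = Y"
    and mp2: "Y' * Y * Y' = Y'" and mp3: "cadj (Y * Y') = Y * Y'" and mp4: "cadj (Y' * Y) = Y' * Y"
    unfolding is_mp_inverse_def carrier_mat_def by auto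
  have Y'_W: "Y' = cadj Y * (cadj Y' * Y')"
  proof -
    have "Y' = cadj (Y' * Y) * Y'" unfolding mp4 using mp2 by simp
    thus ?thesis by (simp add: cadj_mult)
  qed
  have normal: "cadj Y * (Y * Y') = cadj Y"
    using arg_cong[OF mp1, of cadj] mp3 by (simp add: cadj_mult)
  have "Y' = R * (tikhonov Y \<delta> * Y')" by (simp add: mult_eq_extend[OF RN])
  also have "tikhonov Y \<delta> * Y' = cadj Y + of_real \<delta> \<cdot>\<^sub>m Y'"
    by (simp add: tikhonov_def add_mult_distrib_dim normal)
  also have "R * (cadj Y + of_real \<delta> \<cdot>\<^sub>m Y') = R * cadj Y + of_real \<delta> \<cdot>\<^sub>m (R * cadj Y * (cadj Y' * Y'))"
    by (subst Y'_W) (simp add: mult_add_distrib_dim)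
  finally show ?thesis .
qed

(* Quantitative convergence: the entries of N^-1 Y^* differ from those of Y^+ by at most
   C sqrt d, combining the error identity with the uniform bound d |F_ib|^2 <= 1/4. *)
lemma tikhonov_error_bound:
  fixes Y Y' :: "'a::{conjugatable_field, real_normed_field} mat"
  assumes conj_abs: "\<And>x::'a. x * conjugate x = of_real ((norm x)\<^sup>2)"
    and Y: "Y \<in> carrier_mat m n" and mp: "is_mp_inverse Y Y'" and d: "\<delta> > 0"
    and i: "i < n" and j: "j < m"
  shows "norm ((minv (tikhonov Y \<delta>) * cadj Y) $$ (i,j) - Y' $$ (i,j))
    \<le> (\<Sum>b<m. norm ((cadj Y' * Y') $$ (b,j))) / 2 * sqrt \<delta>"
proof -
  have [simp]: "dim_row Y = m" "dim_col Y = n" using Y by auto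
  from mp have [simp]: "dim_row Y' = n" "dim_col Y' = m"
    unfolding is_mp_inverse_def carrier_mat_def by auto
  define W where "W = cadj Y' * Y'"
  have [simp]: "dim_row W = m" "dim_col W = m" by (simp_all add: W_def)
  define R where "R = minv (tikhonov Y \<delta>)"
  note R = tikhonov_minv[OF conj_abs Y d, folded R_def]
  have [simp]: "dim_row R = n" "dim_col R = n" using R(1) by auto
  define F where "F = R * cadj Y"
  have [simp]: "dim_row F = n" "dim_col F = m" by (simp_all add: F_def)
  have Y'_F: "Y' = F + of_real \<delta> \<cdot>\<^sub>m (F * W)"
    unfolding F_def W_def by (rule tikhonov_error_identity[OF _ _ _ _ mp R(3)]) simp_all
  have "Y' $$ (i,j) - F $$ (i,j) = of_real \<delta> * (F * W) $$ (i,j)"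
    using arg_cong[OF Y'_F, of "\<lambda>M. M $$ (i,j)"] i j
    by (simp only: index_add_mat index_smult_mat index_mult_mat(2,3) \<open>dim_row F = n\<close>
        \<open>dim_col W = m\<close>) simp
  also have "\<dots> = (\<Sum>b<m. (of_real \<delta> * F $$ (i,b)) * W $$ (b,j))"
    using i j by (simp add: scalar_prod_def atLeast0LessThan sum_distrib_left mult.assoc)
  finally have diff: "Y' $$ (i,j) - F $$ (i,j) = (\<Sum>b<m. (of_real \<delta> * F $$ (i,b)) * W $$ (b,j))" .
  have "norm (F $$ (i,j) - Y' $$ (i,j)) = norm (Y' $$ (i,j) - F $$ (i,j))"
    by (rule norm_minus_commute)
  also have "\<dots> \<le> (\<Sum>b<m. norm ((of_real \<delta> * F $$ (i,b)) * W $$ (b,j)))"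
    unfolding diff by (rule norm_sum)
  also have "\<dots> \<le> (\<Sum>b<m. (sqrt \<delta> / 2) * norm (W $$ (b,j)))"
  proof (rule sum_mono)
    fix b assume "b \<in> {..<m}"
    hence "\<delta> * (norm (F $$ (i,b)))\<^sup>2 \<le> 1 / 4"
      unfolding F_def using tikhonov_entry_bound[OF conj_abs _ _ _ _ d R(2) i] by simp
    hence "norm (of_real \<delta> * F $$ (i,b)) \<le> sqrt \<delta> / 2"
      using mult_le_sqrt_of_sq_le[OF d] d by (simp add: norm_mult)
    thus "norm ((of_real \<delta> * F $$ (i,b)) * W $$ (b,j)) \<le> (sqrt \<delta> / 2) * norm (W $$ (b,j))"
      unfolding norm_mult[of "of_real \<delta> * F $$ (i,b)"] by (rule mult_right_mono) simp
  qed
  also have "\<dots> = (\<Sum>b<m. norm (W $$ (b,j))) / 2 * sqrt \<delta>"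
    by (simp add: sum_distrib_left sum_divide_distrib mult.commute)
  finally show ?thesis unfolding F_def R_def W_def .
qed

lemma tikhonov_tendsto_mp_inverse:
  fixes Y Y' :: "'a::{conjugatable_field, real_normed_field} mat"
  assumes conj_abs: "\<And>x::'a. x * conjugate x = of_real ((norm x)\<^sup>2)"
    and Y: "Y \<in> carrier_mat m n" and mp: "is_mp_inverse Y Y'"
    and i: "i < n" and j: "j < m"
  shows "((\<lambda>\<delta>. (minv (tikhonov Y \<delta>) * cadj Y) $$ (i,j)) \<longlongrightarrow> Y' $$ (i,j)) (at_right 0)"
proof -
  define C where "C = (\<Sum>b<m. norm ((cadj Y' * Y') $$ (b,j))) / 2"
  have ev: "\<forall>\<^sub>F \<delta> in at_right 0.
      norm ((minv (tikhonov Y \<delta>) * cadj Y) $$ (i,j) - Y' $$ (i,j)) \<le> C * sqrt \<delta>"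
    using eventually_at_right_less[of "0::real"]
    by eventually_elim (unfold C_def, rule tikhonov_error_bound[OF conj_abs Y mp _ i j])
  have "((\<lambda>\<delta>. C * sqrt \<delta>) \<longlongrightarrow> C * sqrt 0) (at_right (0::real))"
    by (intro tendsto_intros)
  hence "((\<lambda>\<delta>. C * sqrt \<delta>) \<longlongrightarrow> 0) (at_right (0::real))" by simp
  with ev have "((\<lambda>\<delta>. (minv (tikhonov Y \<delta>) * cadj Y) $$ (i,j) - Y' $$ (i,j)) \<longlongrightarrow> 0) (at_right 0)"
    by (rule Lim_null_comparison)
  thus ?thesis by (simp add: LIM_zero_iff)
qed

lemma tendsto_entrywise_mult:
  fixes P Q L :: "'a::real_normed_field mat" and G :: "'b \<Rightarrow> 'a mat"
  assumes P: "P \<in> carrier_mat p m" and Q: "Q \<in> carrier_mat n q" and L: "L \<in> carrier_mat m n"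
    and dims: "\<forall>\<^sub>F x in net. G x \<in> carrier_mat m n"
    and lim: "\<And>a b. a < m \<Longrightarrow> b < n \<Longrightarrow> ((\<lambda>x. G x $$ (a,b)) \<longlongrightarrow> L $$ (a,b)) net"
    and i: "i < p" and j: "j < q"
  shows "((\<lambda>x. (P * G x * Q) $$ (i,j)) \<longlongrightarrow> (P * L * Q) $$ (i,j)) net"
proof -
  have entry: "(P * M * Q) $$ (i,j) = (\<Sum>a<m. P $$ (i,a) * (\<Sum>b<n. M $$ (a,b) * Q $$ (b,j)))"
    if "M \<in> carrier_mat m n" for M
    using that P Q i j by (simp add: scalar_prod_def atLeast0LessThan)
  have "((\<lambda>x. \<Sum>a<m. P $$ (i,a) * (\<Sum>b<n. G x $$ (a,b) * Q $$ (b,j)))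
      \<longlongrightarrow> (\<Sum>a<m. P $$ (i,a) * (\<Sum>b<n. L $$ (a,b) * Q $$ (b,j)))) net"
    by (intro tendsto_sum tendsto_mult tendsto_const lim) auto
  moreover have "\<forall>\<^sub>F x in net. (\<Sum>a<m. P $$ (i,a) * (\<Sum>b<n. G x $$ (a,b) * Q $$ (b,j)))
      = (P * G x * Q) $$ (i,j)"
    using dims by eventually_elim (simp add: entry)
  ultimately show ?thesis unfolding entry[OF L] by (rule Lim_transform_eventually)
qed

lemma regularised_eq_tikhonov:
  fixes X k kinv :: "'a::{conjugatable_field, real_normed_field} mat"
  assumes [simp]: "dim_row X = n" "dim_col X = n" "dim_row k = n" "dim_col k = n"
    "dim_row kinv = n" "dim_col kinv = n"
    and k_kinv: "k * kinv = 1\<^sub>m n" and kinv_k: "kinv * k = 1\<^sub>m n"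
    and K: "Kmat n = k * cadj k"
  shows "cadj X * Kmat n * X * Kmat n + of_real \<delta> \<cdot>\<^sub>m 1\<^sub>m n
    = cadj kinv * tikhonov (cadj k * X * k) \<delta> * cadj k"
proof -
  have adj_inv1: "cadj kinv * cadj k = 1\<^sub>m n"
    using cadj_inverse[OF _ _ k_kinv] by simp
  have [simp]: "kinv * (k * W) = W" "cadj kinv * (cadj k * W) = W" if "dim_row W = n" for W
    using that by (simp_all add: mult_eq_extend[OF kinv_k] mult_eq_extend[OF adj_inv1])
  have "cadj kinv * (of_real \<delta> \<cdot>\<^sub>m 1\<^sub>m n) * cadj k = of_real \<delta> \<cdot>\<^sub>m (cadj kinv * cadj k)"
    by simp
  thus ?thesis unfolding tikhonov_def K adj_inv1
    by (simp add: cadj_mult mult_add_distrib_dim add_mult_distrib_dim)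
qed

lemma regularised_inverse_transfer:
  fixes X k kinv :: "'a::{conjugatable_field, real_normed_field} mat"
  assumes conj_abs: "\<And>x::'a. x * conjugate x = of_real ((norm x)\<^sup>2)"
    and [simp]: "dim_row X = n" "dim_col X = n" "dim_row k = n" "dim_col k = n"
    "dim_row kinv = n" "dim_col kinv = n"
    and k_kinv: "k * kinv = 1\<^sub>m n" and kinv_k: "kinv * k = 1\<^sub>m n"
    and K: "Kmat n = k * cadj k" and d: "\<delta> > 0"
  defines "Y \<equiv> cadj k * X * k" and "M \<equiv> cadj X * Kmat n * X * Kmat n + of_real \<delta> \<cdot>\<^sub>m 1\<^sub>m n"
  shows "invertible_mat M"
    "minv M * cadj X = cadj kinv * (minv (tikhonov Y \<delta>) * cadj Y) * kinv"
proof -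
  have Y: "Y \<in> carrier_mat n n" by (simp add: Y_def carrier_matI)
  hence [simp]: "dim_row Y = n" "dim_col Y = n" by auto
  define R where "R = minv (tikhonov Y \<delta>)"
  note R = tikhonov_minv[OF conj_abs Y d, folded R_def]
  have [simp]: "dim_row R = n" "dim_col R = n" using R(1) by auto
  have adj_inv1: "cadj kinv * cadj k = 1\<^sub>m n" and adj_inv2: "cadj k * cadj kinv = 1\<^sub>m n"
    using cadj_inverse[OF _ _ k_kinv] cadj_inverse[OF _ _ kinv_k] by simp_all
  have [simp]: "cadj k * (cadj kinv * W) = W" if "dim_row W = n" for W
    using that by (simp add: mult_eq_extend[OF adj_inv2])
  have M: "M = cadj kinv * tikhonov Y \<delta> * cadj k"
    unfolding M_def Y_def by (rule regularised_eq_tikhonov[OF assms(2-7) k_kinv kinv_k K])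
  have [simp]: "dim_row M = n" "dim_col M = n" unfolding M by simp_all
  have MR: "M * (cadj kinv * R * cadj k) = 1\<^sub>m n"
    unfolding M by (simp add: mult_eq_extend[OF R(2)] adj_inv1)
  have RM: "(cadj kinv * R * cadj k) * M = 1\<^sub>m n"
    unfolding M by (simp add: mult_eq_extend[OF R(3)] adj_inv1)
  show "invertible_mat M"
    unfolding invertible_mat_def inverts_mat_def using MR RM
    by (intro conjI exI[of _ "cadj kinv * R * cadj k"]) simp_all
  have "cadj X = cadj kinv * cadj Y * kinv"
    unfolding Y_def by (simp add: cadj_mult k_kinv mult_eq_extend[OF adj_inv1])
  thus "minv M * cadj X = cadj kinv * (R * cadj Y) * kinv"
    unfolding minv_eqI[OF _ _ _ _ MR RM, simplified] by (simp add: adj_inv2)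
qed

lemma regularised_inverse_tendsto:
  fixes X k kinv Y' :: "'a::{conjugatable_field, real_normed_field} mat"
  assumes conj_abs: "\<And>x::'a. x * conjugate x = of_real ((norm x)\<^sup>2)"
    and dims: "dim_row X = n" "dim_col X = n" "dim_row k = n" "dim_col k = n"
    "dim_row kinv = n" "dim_col kinv = n"
    and k_kinv: "k * kinv = 1\<^sub>m n" and kinv_k: "kinv * k = 1\<^sub>m n"
    and K: "Kmat n = k * cadj k" and mp: "is_mp_inverse (cadj k * X * k) Y'"
    and i: "i < n" and j: "j < n"
  shows "((\<lambda>\<delta>::real. (minv (cadj X * Kmat n * X * Kmat n + of_real \<delta> \<cdot>\<^sub>m 1\<^sub>m n) * cadj X) $$ (i,j))
    \<longlongrightarrow> (cadj kinv * Y' * kinv) $$ (i,j)) (at_right 0)"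
proof -
  note [simp] = dims
  define Y where "Y = cadj k * X * k"
  have Y: "Y \<in> carrier_mat n n" by (simp add: Y_def carrier_matI)
  hence [simp]: "dim_row Y = n" "dim_col Y = n" by auto
  have mp_Y: "is_mp_inverse Y Y'" using mp unfolding Y_def .
  hence Y': "Y' \<in> carrier_mat n n" unfolding is_mp_inverse_def by simp
  have "minv (tikhonov Y \<delta>) * cadj Y \<in> carrier_mat n n" if "\<delta> > 0" for \<delta>
    using tikhonov_minv(1)[OF conj_abs Y that] by (intro carrier_matI) auto
  hence ev: "\<forall>\<^sub>F \<delta> in at_right 0. minv (tikhonov Y \<delta>) * cadj Y \<in> carrier_mat n n"
    using eventually_at_right_less[of "0::real"] by (auto elim: eventually_mono)
  have "cadj kinv \<in> carrier_mat n n" "kinv \<in> carrier_mat n n" by (auto intro: carrier_matI)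
  from tendsto_entrywise_mult[OF this Y' ev tikhonov_tendsto_mp_inverse[OF conj_abs Y mp_Y] i j]
  have "((\<lambda>\<delta>. (cadj kinv * (minv (tikhonov Y \<delta>) * cadj Y) * kinv) $$ (i,j))
      \<longlongrightarrow> (cadj kinv * Y' * kinv) $$ (i,j)) (at_right 0)" .
  moreover have "\<forall>\<^sub>F \<delta> in at_right 0. (cadj kinv * (minv (tikhonov Y \<delta>) * cadj Y) * kinv) $$ (i,j)
      = (minv (cadj X * Kmat n * X * Kmat n + of_real \<delta> \<cdot>\<^sub>m 1\<^sub>m n) * cadj X) $$ (i,j)"
    using eventually_at_right_less[of "0::real"]
    by eventually_elim
      (simp only: regularised_inverse_transfer(2)[OF conj_abs dims k_kinv kinv_k K, folded Y_def])
  ultimately show ?thesis by (rule Lim_transform_eventually)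
qed

theorem theorem6:
  fixes X k kinv :: "'a::{conjugatable_field, real_normed_field} mat" and n :: nat
  assumes conj_abs: "\<And>x::'a. x * conjugate x = of_real ((norm x)\<^sup>2)"
    and X: "X \<in> carrier_mat n n"
    and k: "k \<in> carrier_mat n n" and kinv: "kinv \<in> carrier_mat n n"
    and k_inv1: "k * kinv = 1\<^sub>m n" and k_inv2: "kinv * k = 1\<^sub>m n"
    and K_fact: "Kmat n = k * cadj k"
  shows "mp_inverse (cadj (Jmat n) * X * Jmat n) \<in> Smats (Suc n)
    \<and> is_circ_mp_inverse n X (cadj kinv * mp_inverse (cadj k * X * k) * kinv)
    \<and> mp_inverse (cadj (Jmat n) * X * Jmat n)
        = cadj (Jmat n) * (cadj kinv * mp_inverse (cadj k * X * k) * kinv) * Jmat n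
    \<and> (\<forall>\<delta>>0. invertible_mat (cadj X * Kmat n * X * Kmat n + of_real \<delta> \<cdot>\<^sub>m 1\<^sub>m n))
    \<and> (\<exists>L \<in> carrier_mat n n.
         (\<forall>i<n. \<forall>j<n. ((\<lambda>\<delta>::real. (minv (cadj X * Kmat n * X * Kmat n + of_real \<delta> \<cdot>\<^sub>m 1\<^sub>m n)
                                   * cadj X) $$ (i,j)) \<longlongrightarrow> L $$ (i,j)) (at_right 0))
         \<and> mp_inverse (cadj (Jmat n) * X * Jmat n) = cadj (Jmat n) * L * Jmat n)"
proof -
  have dims: "dim_row X = n" "dim_col X = n" "dim_row k = n" "dim_col k = n"
    "dim_row kinv = n" "dim_col kinv = n" using X k kinv by auto
  have "cadj k * X * k \<in> carrier_mat n n" using X k by (intro mult_carrier_mat cadj_carrier_mat)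
  then obtain Y' where mp_Y: "is_mp_inverse (cadj k * X * k) Y'"
    using mp_inverse_exists[OF conj_abs] by blast
  define Z where "Z = cadj kinv * Y' * kinv"
  have "Y' \<in> carrier_mat n n" using mp_Y dims unfolding is_mp_inverse_def by simp
  hence Z: "Z \<in> carrier_mat n n" unfolding Z_def using kinv by (intro mult_carrier_mat cadj_carrier_mat)
  have circ: "is_circ_mp_inverse n X Z"
    unfolding Z_def by (rule circ_mp_inverse_from_factor[OF dims k_inv1 k_inv2 K_fact mp_Y])
  have lift: "mp_inverse (cadj (Jmat n) * X * Jmat n) = cadj (Jmat n) * Z * Jmat n"
    by (rule mp_inverse_eqI[OF phi_circ_mp_inverse[OF dims(1,2) circ]])
  have limit: "((\<lambda>\<delta>::real. (minv (cadj X * Kmat n * X * Kmat n + of_real \<delta> \<cdot>\<^sub>m 1\<^sub>m n)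
      * cadj X) $$ (i,j)) \<longlongrightarrow> Z $$ (i,j)) (at_right 0)" if "i < n" "j < n" for i j
    unfolding Z_def by (rule regularised_inverse_tendsto[OF conj_abs dims k_inv1 k_inv2 K_fact mp_Y that])
  show ?thesis
    unfolding mp_inverse_eqI[OF mp_Y] Z_def[symmetric]
  proof (intro conjI)
    show "mp_inverse (cadj (Jmat n) * X * Jmat n) \<in> Smats (Suc n)"
      unfolding lift using Z by (intro phi_in_Smats) auto
    show "\<forall>\<delta>>0. invertible_mat (cadj X * Kmat n * X * Kmat n + of_real \<delta> \<cdot>\<^sub>m 1\<^sub>m n)"
      using regularised_inverse_transfer(1)[OF conj_abs dims k_inv1 k_inv2 K_fact] by blast
    show "is_circ_mp_inverse n X Z" by (rule circ)
    show "mp_inverse (cadj (Jmat n) * X * Jmat n) = cadj (Jmat n) * Z * Jmat n" by (rule lift)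
  qed (rule bexI[OF _ Z], intro conjI allI impI lift limit)
qed

end
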